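(* Let $\mathbb{F}$ be a field, $X$ a finite set, $I$ an ideal of the free associative algebra $\mathbb{F}\langle X\rangle$, and $A=\mathbb{F}\langle X\rangle/I$. Let $<$ be a monomial order on $X^*$ and let $\widetilde{A_<}$ be the associated monomial algebra of $A$ with respect to $<$. Suppose there exist a real polynomial $f(x)$ of degree $d\ge 1$ and an integer $N$ such that for all $u,v\in X^*$ with $|u|\ge N$, $$u<v \implies |u|\le f(|v|).$$ Then $$\operatorname{GKdim}(\widetilde{A_<})\le \operatorname{GKdim}(A)\le d\cdot \operatorname{GKdim}(\widetilde{A_<}).$$
   Context: All algebras are associative and unital over a field $\mathbb{F}$. $X^*$ is the free monoid on $X$ (words, with empty word $1$), and $|u|$ denotes the length of a word $u$. A monomial order on $X^*$ is a well order $<$ on $X^*$ such that $u<v$ implies $w_1uw_2<w_1vw_2$ for all $w_1,w_2\in X^*$. For $0\ne g\in\mathbb{F}\langle X\rangle$, $\overline{g}$ denotes its leading monomial, i.e. the $<$-largest word appearing in $g$ with nonzero coefficient. For an ideal $I$, $\overline{I}=\{\overline{g}\mid 0\neq g\in I\}$, and the associated monomial algebra of $A=\mathbb{F}\langle X\rangle/I$ with respect to $<$ is $\widetilde{A_<}=\mathbb{F}\langle X\rangle/J$, where $J$ is the ideal generated by $\overline{I}$. $\operatorname{GKdim}$ denotes Gelfand–Kirillov dimension. *)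

theory Defs
  imports Complex_Main "HOL-Computational_Algebra.Polynomial"
    "HOL-Library.Extended_Real" "HOL-Library.Liminf_Limsup"
begin

text \<open>Elements of the free algebra F<X>: finitely supported functions from words
  (lists over X) to the field 'k.  Words are lists; the empty list is the empty word.\<close>

definition fa_elem :: "'x set \<Rightarrow> ('x list \<Rightarrow> 'k::field) \<Rightarrow> bool" where
  "fa_elem X p \<longleftrightarrow> finite {w. p w \<noteq> 0} \<and> (\<forall>w. p w \<noteq> 0 \<longrightarrow> w \<in> lists X)"

definition fa_zero :: "'x list \<Rightarrow> 'k::field" where
  "fa_zero = (\<lambda>_. 0)"

definition fa_add :: "('x list \<Rightarrow> 'k::field) \<Rightarrow> ('x list \<Rightarrow> 'k) \<Rightarrow> 'x list \<Rightarrow> 'k" where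
  "fa_add p q = (\<lambda>w. p w + q w)"

definition fa_mul :: "('x list \<Rightarrow> 'k::field) \<Rightarrow> ('x list \<Rightarrow> 'k) \<Rightarrow> 'x list \<Rightarrow> 'k" where
  "fa_mul p q = (\<lambda>w. \<Sum>i\<le>length w. p (take i w) * q (drop i w))"

definition fa_mono :: "'x list \<Rightarrow> 'x list \<Rightarrow> 'k::field" where
  "fa_mono u = (\<lambda>v. if v = u then 1 else 0)"

definition fa_ideal :: "'x set \<Rightarrow> ('x list \<Rightarrow> 'k::field) set \<Rightarrow> bool" where
  "fa_ideal X I \<longleftrightarrow> I \<subseteq> {p. fa_elem X p} \<and> fa_zero \<in> I \<and>
     (\<forall>p\<in>I. \<forall>q\<in>I. fa_add p q \<in> I) \<and>
     (\<forall>p\<in>I. \<forall>a b. fa_elem X a \<and> fa_elem X b \<longrightarrow> fa_mul (fa_mul a p) b \<in> I)"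

definition fa_ideal_gen_monos :: "'x set \<Rightarrow> 'x list set \<Rightarrow> ('x list \<Rightarrow> 'k::field) set" where
  "fa_ideal_gen_monos X S = \<Inter>{J. fa_ideal X J \<and> fa_mono ` S \<subseteq> J}"

definition monomial_order :: "'x set \<Rightarrow> ('x list \<Rightarrow> 'x list \<Rightarrow> bool) \<Rightarrow> bool" where
  "monomial_order X lt \<longleftrightarrow>
     (\<forall>u\<in>lists X. \<not> lt u u) \<and>
     (\<forall>u\<in>lists X. \<forall>v\<in>lists X. \<forall>w\<in>lists X. lt u v \<longrightarrow> lt v w \<longrightarrow> lt u w) \<and>
     (\<forall>u\<in>lists X. \<forall>v\<in>lists X. u = v \<or> lt u v \<or> lt v u) \<and>
     wf {(u, v). u \<in> lists X \<and> v \<in> lists X \<and> lt u v} \<and>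
     (\<forall>u\<in>lists X. \<forall>v\<in>lists X. \<forall>w1\<in>lists X. \<forall>w2\<in>lists X.
        lt u v \<longrightarrow> lt (w1 @ u @ w2) (w1 @ v @ w2))"

definition lead_mono :: "('x list \<Rightarrow> 'x list \<Rightarrow> bool) \<Rightarrow> ('x list \<Rightarrow> 'k::field) \<Rightarrow> 'x list" where
  "lead_mono lt g = (THE w. g w \<noteq> 0 \<and> (\<forall>v. g v \<noteq> 0 \<longrightarrow> v = w \<or> lt v w))"

definition lead_monos :: "('x list \<Rightarrow> 'x list \<Rightarrow> bool) \<Rightarrow> ('x list \<Rightarrow> 'k::field) set \<Rightarrow> 'x list set" where
  "lead_monos lt I = {lead_mono lt g | g. g \<in> I \<and> g \<noteq> fa_zero}"

text \<open>The ideal J generated by the leading monomials; the associated monomial algebra is F<X>/J.\<close>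
definition assoc_monomial_ideal :: "'x set \<Rightarrow> ('x list \<Rightarrow> 'x list \<Rightarrow> bool) \<Rightarrow> ('x list \<Rightarrow> 'k::field) set \<Rightarrow> ('x list \<Rightarrow> 'k) set" where
  "assoc_monomial_ideal X lt I = fa_ideal_gen_monos X (lead_monos lt I)"

definition indep_mod :: "('x list \<Rightarrow> 'k::field) set \<Rightarrow> 'x list set \<Rightarrow> bool" where
  "indep_mod I S \<longleftrightarrow> (\<forall>c :: 'x list \<Rightarrow> 'k.
      (\<lambda>v. \<Sum>w\<in>S. c w * fa_mono w v) \<in> I \<longrightarrow> (\<forall>w\<in>S. c w = 0))"

text \<open>Growth function of F<X>/I w.r.t. the generating subspace V = span(1, X):
  dim V^n = dimension of the span of the images of the words of length \<le> n,
  i.e. the maximal size of a set of such words whose images are linearly independent.\<close>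
definition growth :: "'x set \<Rightarrow> ('x list \<Rightarrow> 'k::field) set \<Rightarrow> nat \<Rightarrow> nat" where
  "growth X I n = Max {card S | S. S \<subseteq> {w \<in> lists X. length w \<le> n} \<and> indep_mod I S}"

definition GKdim :: "'x set \<Rightarrow> ('x list \<Rightarrow> 'k::field) set \<Rightarrow> ereal" where
  "GKdim X I = limsup (\<lambda>n. ereal (ln (real (growth X I n)) / ln (real n)))"

end

theory Submission
  imports Defs "HOL-Library.Function_Algebras" "HOL-Analysis.Extended_Real_Limits"
    "HOL-Real_Asymp.Real_Asymp"
begin

(* Let J be the associated monomial ideal.  Leading monomials of elements of I lie in J, so words
   independent modulo J are independent modulo I, whence growth_J(n) \<le> growth_I(n).  Conversely,
   modulo I every word reduces to a combination of normal words (words with no leading monomial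
   as a factor) that are not above it, and normal words stay independent modulo J; hence
   growth_I(n) \<le> growth_J(m) as soon as every word below a word of length \<le> n has length \<le> m.
   The hypothesis on the order gives m = K n^d, and ln(K n^d) / ln n \<rightarrow> d produces the factor d
   between the limsups of ln growth(n) / ln n. *)

section \<open>The free algebra\<close>

lemma sum_fun_apply: "(sum f A) x = (\<Sum>a\<in>A. f a x)"
  by (induction A rule: infinite_finite_induct) auto

lemma fa_add_eq [simp]: "fa_add p q = p + q"
  by (simp add: fa_add_def fun_eq_iff)

lemma fa_zero_eq [simp]: "fa_zero = 0"
  by (simp add: fa_zero_def fun_eq_iff)

lemma sum_fa_mono_apply:
  "finite S \<Longrightarrow> (\<Sum>w\<in>S. c w * fa_mono w v) = (if v \<in> S then c v else 0)"
proof -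
  assume "finite S"
  have "(\<Sum>w\<in>S. c w * fa_mono w v) = (\<Sum>w\<in>S. if v = w then c v else 0)"
    by (rule sum.cong) (auto simp: fa_mono_def)
  then show ?thesis
    using \<open>finite S\<close> by simp
qed

lemma fa_monomial_expansion:
  "finite T \<Longrightarrow> (\<And>w. p w \<noteq> 0 \<Longrightarrow> w \<in> T) \<Longrightarrow> (\<lambda>v. \<Sum>w\<in>T. p w * fa_mono w v) = p"
  by (auto simp: sum_fa_mono_apply fun_eq_iff)

lemma fa_elem_mono: "w \<in> lists X \<Longrightarrow> fa_elem X (fa_mono w)"
  by (auto simp: fa_elem_def fa_mono_def)

lemma fa_elem_diff_scale:
  assumes "fa_elem X p" and "fa_elem X q"
  shows "fa_elem X (\<lambda>w. p w - c * q w)"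
proof -
  have "{w. p w - c * q w \<noteq> 0} \<subseteq> {w. p w \<noteq> 0} \<union> {w. q w \<noteq> 0}"
    by auto
  then show ?thesis
    using assms unfolding fa_elem_def by (auto intro: finite_subset)
qed

lemma fa_mul_nonzeroD:
  "fa_mul p q w \<noteq> 0 \<Longrightarrow> \<exists>i\<le>length w. p (take i w) \<noteq> 0 \<and> q (drop i w) \<noteq> 0"
proof -
  assume "fa_mul p q w \<noteq> 0"
  then obtain i where "i \<le> length w" "p (take i w) * q (drop i w) \<noteq> 0"
    unfolding fa_mul_def by (meson atMost_iff sum.not_neutral_contains_not_neutral)
  then show ?thesis
    by auto
qed

lemma fa_elem_mul:
  assumes p: "fa_elem X p" and q: "fa_elem X q"
  shows "fa_elem X (fa_mul p q)"
proof -
  let ?concat = "\<lambda>(x, y). x @ y"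
  have supp: "{w. fa_mul p q w \<noteq> 0} \<subseteq> ?concat ` ({w. p w \<noteq> 0} \<times> {w. q w \<noteq> 0})"
  proof
    fix w assume "w \<in> {w. fa_mul p q w \<noteq> 0}"
    then obtain i where "p (take i w) \<noteq> 0" "q (drop i w) \<noteq> 0"
      using fa_mul_nonzeroD by blast
    then show "w \<in> ?concat ` ({w. p w \<noteq> 0} \<times> {w. q w \<noteq> 0})"
      by (intro image_eqI[of _ _ "(take i w, drop i w)"]) auto
  qed
  have "finite (?concat ` ({w. p w \<noteq> 0} \<times> {w. q w \<noteq> 0}))"
    using p q by (simp add: fa_elem_def)
  moreover have "w \<in> lists X" if nz: "fa_mul p q w \<noteq> 0" for w
  proof -
    obtain i where "p (take i w) \<noteq> 0" "q (drop i w) \<noteq> 0"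
      using fa_mul_nonzeroD[OF nz] by blast
    then have "take i w @ drop i w \<in> lists X"
      using p q unfolding fa_elem_def append_in_lists_conv by blast
    then show ?thesis
      by simp
  qed
  ultimately show ?thesis
    using supp unfolding fa_elem_def by (auto intro: finite_subset)
qed

lemma fa_mul_mono_left:
  "fa_mul (fa_mono a) p = (\<lambda>w. if take (length a) w = a then p (drop (length a) w) else 0)"
proof (rule ext)
  fix w :: "'a list"
  have "(\<Sum>i\<le>length w. fa_mono a (take i w) * p (drop i w)) =
        (\<Sum>i\<le>length w. if i = length a then
           (if take (length a) w = a then p (drop (length a) w) else 0) else 0)"
  proof (rule sum.cong)
    fix i assume "i \<in> {..length w}"
    then have "length (take i w) = i"
      by simp
    then show "fa_mono a (take i w) * p (drop i w) = (if i = length a then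
           (if take (length a) w = a then p (drop (length a) w) else 0) else 0)"
      by (cases "i = length a") (auto simp: fa_mono_def)
  qed simp
  then show "fa_mul (fa_mono a) p w =
      (if take (length a) w = a then p (drop (length a) w) else 0)"
    by (auto simp: fa_mul_def)
qed

lemma fa_mul_mono_right:
  "fa_mul p (fa_mono b) = (\<lambda>w. if drop (length w - length b) w = b \<and> length b \<le> length w
      then p (take (length w - length b) w) else 0)"
proof (rule ext)
  fix w :: "'a list"
  have "(\<Sum>i\<le>length w. p (take i w) * fa_mono b (drop i w)) =
        (\<Sum>i\<le>length w. if i = length w - length b then
           (if drop (length w - length b) w = b \<and> length b \<le> length w
            then p (take (length w - length b) w) else 0) else 0)"
  proof (rule sum.cong)
    fix i assume "i \<in> {..length w}"
    then have "length (drop i w) = length w - i" "i \<le> length w"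
      by simp_all
    then show "p (take i w) * fa_mono b (drop i w) = (if i = length w - length b then
           (if drop (length w - length b) w = b \<and> length b \<le> length w
            then p (take (length w - length b) w) else 0) else 0)"
      by (cases "i = length w - length b") (auto simp: fa_mono_def)
  qed simp
  then show "fa_mul p (fa_mono b) w = (if drop (length w - length b) w = b \<and> length b \<le> length w
      then p (take (length w - length b) w) else 0)"
    by (simp add: fa_mul_def)
qed

lemma fa_mul_monos_apply: "fa_mul (fa_mul (fa_mono a) p) (fa_mono b) (a @ t @ b) = p t"
  by (simp add: fa_mul_mono_left fa_mul_mono_right)

lemma fa_mul_monos_nonzeroD:
  assumes "fa_mul (fa_mul (fa_mono a) p) (fa_mono b) v \<noteq> 0"
  shows "\<exists>t. v = a @ t @ b \<and> p t \<noteq> 0"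
proof -
  define u where "u = take (length v - length b) v"
  define t where "t = drop (length a) u"
  have "fa_mul (fa_mul (fa_mono a) p) (fa_mono b) v =
      (if drop (length v - length b) v = b \<and> length b \<le> length v then
        (if take (length a) u = a then p t else 0) else 0)"
    by (simp only: fa_mul_mono_left fa_mul_mono_right u_def t_def)
  then have "drop (length v - length b) v = b" "take (length a) u = a" "p t \<noteq> 0"
    using assms by (auto split: if_splits)
  moreover have "v = u @ drop (length v - length b) v"
    unfolding u_def by (rule append_take_drop_id[symmetric])
  moreover have "u = take (length a) u @ t"
    unfolding t_def by (rule append_take_drop_id[symmetric])
  ultimately show ?thesis
    by auto
qed

context
  fixes X :: "'x set" and I :: "('x list \<Rightarrow> 'k::field) set"
  assumes ideal: "fa_ideal X I"
begin

lemma fa_ideal_zero: "0 \<in> I"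
  using ideal by (simp add: fa_ideal_def)

lemma fa_ideal_add: "p \<in> I \<Longrightarrow> q \<in> I \<Longrightarrow> p + q \<in> I"
  using ideal by (simp add: fa_ideal_def)

lemma fa_ideal_elem: "p \<in> I \<Longrightarrow> fa_elem X p"
  using ideal by (auto simp: fa_ideal_def)

lemma fa_ideal_mul:
  "p \<in> I \<Longrightarrow> fa_elem X a \<Longrightarrow> fa_elem X b \<Longrightarrow> fa_mul (fa_mul a p) b \<in> I"
  using ideal by (auto simp: fa_ideal_def)

lemma fa_ideal_scale:
  assumes "p \<in> I"
  shows "(\<lambda>w. c * p w) \<in> I"
proof -
  let ?c = "\<lambda>v. c * fa_mono [] v"
  have "fa_elem X ?c"
    unfolding fa_elem_def by (rule conjI, rule finite_subset[of _ "{[]}"]) (auto simp: fa_mono_def)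
  have "fa_mul ?c p = (\<lambda>w. c * p w)"
  proof
    fix w
    have "(\<Sum>i\<le>length w. ?c (take i w) * p (drop i w)) = (\<Sum>i\<le>length w. if i = 0 then c * p w else 0)"
      by (rule sum.cong) (auto simp: fa_mono_def)
    then show "fa_mul ?c p w = c * p w"
      by (simp add: fa_mul_def)
  qed
  moreover have "fa_mul q (fa_mono []) = q" for q :: "'x list \<Rightarrow> 'k"
    by (simp add: fa_mul_mono_right)
  ultimately show ?thesis
    using fa_ideal_mul[OF assms \<open>fa_elem X ?c\<close> fa_elem_mono[of "[]" X]] by simp
qed

lemma fa_ideal_lincomb:
  "finite E \<Longrightarrow> (\<And>v. v \<in> E \<Longrightarrow> q v \<in> I) \<Longrightarrow> (\<lambda>t. \<Sum>v\<in>E. k v * q v t) \<in> I"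
proof (induction E rule: finite_induct)
  case empty
  then show ?case
    using fa_ideal_zero by (simp add: zero_fun_def)
next
  case (insert x F)
  have "(\<lambda>t. \<Sum>v\<in>insert x F. k v * q v t) = (\<lambda>t. k x * q x t) + (\<lambda>t. \<Sum>v\<in>F. k v * q v t)"
    using insert by (simp add: fun_eq_iff)
  then show ?case
    using insert by (simp add: fa_ideal_add fa_ideal_scale)
qed

end

section \<open>Monomial orders and leading monomials\<close>

lemma monomial_orderD:
  assumes "monomial_order X lt"
  shows "\<forall>u\<in>lists X. \<not> lt u u"
    and "\<forall>u\<in>lists X. \<forall>v\<in>lists X. \<forall>w\<in>lists X. lt u v \<longrightarrow> lt v w \<longrightarrow> lt u w"
    and "\<forall>u\<in>lists X. \<forall>v\<in>lists X. u = v \<or> lt u v \<or> lt v u"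
    and "wf {(u, v). u \<in> lists X \<and> v \<in> lists X \<and> lt u v}"
    and "\<forall>u\<in>lists X. \<forall>v\<in>lists X. \<forall>a\<in>lists X. \<forall>b\<in>lists X.
           lt u v \<longrightarrow> lt (a @ u @ b) (a @ v @ b)"
proof -
  note parts = assms[unfolded monomial_order_def]
  show "\<forall>u\<in>lists X. \<not> lt u u"
    using parts by (rule conjunct1)
  show "\<forall>u\<in>lists X. \<forall>v\<in>lists X. \<forall>w\<in>lists X. lt u v \<longrightarrow> lt v w \<longrightarrow> lt u w"
    using parts[THEN conjunct2] by (rule conjunct1)
  show "\<forall>u\<in>lists X. \<forall>v\<in>lists X. u = v \<or> lt u v \<or> lt v u"
    using parts[THEN conjunct2, THEN conjunct2] by (rule conjunct1)
  show "wf {(u, v). u \<in> lists X \<and> v \<in> lists X \<and> lt u v}"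
    using parts[THEN conjunct2, THEN conjunct2, THEN conjunct2] by (rule conjunct1)
  show "\<forall>u\<in>lists X. \<forall>v\<in>lists X. \<forall>a\<in>lists X. \<forall>b\<in>lists X.
      lt u v \<longrightarrow> lt (a @ u @ b) (a @ v @ b)"
    using parts[THEN conjunct2, THEN conjunct2, THEN conjunct2, THEN conjunct2] .
qed

context
  fixes X :: "'x set" and lt :: "'x list \<Rightarrow> 'x list \<Rightarrow> bool"
  assumes order: "monomial_order X lt"
begin

lemma monomial_order_irrefl: "u \<in> lists X \<Longrightarrow> \<not> lt u u"
  using monomial_orderD(1)[OF order] by blast

lemma monomial_order_trans:
  "u \<in> lists X \<Longrightarrow> v \<in> lists X \<Longrightarrow> w \<in> lists X \<Longrightarrow> lt u v \<Longrightarrow> lt v w \<Longrightarrow> lt u w"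
  using monomial_orderD(2)[OF order] by blast

lemma monomial_order_total: "u \<in> lists X \<Longrightarrow> v \<in> lists X \<Longrightarrow> u = v \<or> lt u v \<or> lt v u"
  using monomial_orderD(3)[OF order] by blast

lemma monomial_order_mult:
  "u \<in> lists X \<Longrightarrow> v \<in> lists X \<Longrightarrow> a \<in> lists X \<Longrightarrow> b \<in> lists X \<Longrightarrow> lt u v \<Longrightarrow>
    lt (a @ u @ b) (a @ v @ b)"
  using monomial_orderD(5)[OF order] by blast

lemma monomial_order_has_max:
  "finite S \<Longrightarrow> S \<noteq> {} \<Longrightarrow> S \<subseteq> lists X \<Longrightarrow> \<exists>w\<in>S. \<forall>v\<in>S. v = w \<or> lt v w"
proof (induction S rule: finite_ne_induct)
  case (insert x F)
  then obtain w where w: "w \<in> F" "\<forall>v\<in>F. v = w \<or> lt v w"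
    by auto
  have "x \<in> lists X" "w \<in> lists X" "F \<subseteq> lists X"
    using insert.prems w(1) by auto
  then consider "lt w x" | "x = w \<or> lt x w"
    using monomial_order_total[of x w] by blast
  then show ?case
  proof cases
    case 1
    have "lt v x" if "v \<in> F" for v
    proof -
      have "v = w \<or> lt v w" "v \<in> lists X"
        using w(2) that \<open>F \<subseteq> lists X\<close> by auto
      then show ?thesis
        using 1 monomial_order_trans[of v w x] \<open>w \<in> lists X\<close> \<open>x \<in> lists X\<close> by blast
    qed
    then show ?thesis
      by blast
  next
    case 2
    then show ?thesis
      using w by blast
  qed
qed simp

lemma lead_mono_spec:
  assumes g: "fa_elem X g" and nz: "g \<noteq> 0"
  shows "g (lead_mono lt g) \<noteq> 0" and "\<And>v. g v \<noteq> 0 \<Longrightarrow> v = lead_mono lt g \<or> lt v (lead_mono lt g)"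
    and "lead_mono lt g \<in> lists X"
proof -
  let ?S = "{w. g w \<noteq> 0}"
  have supp: "finite ?S" "?S \<subseteq> lists X" "?S \<noteq> {}"
    using g nz by (auto simp: fa_elem_def fun_eq_iff)
  then obtain w where w: "w \<in> ?S" "\<forall>v\<in>?S. v = w \<or> lt v w"
    using monomial_order_has_max[OF supp(1,3,2)] by blast
  have "lead_mono lt g = w"
    unfolding lead_mono_def
  proof (rule the_equality)
    fix w' assume w': "g w' \<noteq> 0 \<and> (\<forall>v. g v \<noteq> 0 \<longrightarrow> v = w' \<or> lt v w')"
    show "w' = w"
    proof (rule ccontr)
      assume "w' \<noteq> w"
      then have "lt w w'" "lt w' w" "w \<in> lists X" "w' \<in> lists X"
        using w w' supp(2) by auto
      then show False
        using monomial_order_trans[of w w' w] monomial_order_irrefl[of w] by blast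
    qed
  qed (use w in simp)
  then show "g (lead_mono lt g) \<noteq> 0" "\<And>v. g v \<noteq> 0 \<Longrightarrow> v = lead_mono lt g \<or> lt v (lead_mono lt g)"
    "lead_mono lt g \<in> lists X"
    using w supp(2) by auto
qed

end

lemma lead_monos_subset_lists:
  assumes ideal: "fa_ideal X I" and order: "monomial_order X lt"
  shows "lead_monos lt I \<subseteq> lists X"
proof
  fix l assume "l \<in> lead_monos lt I"
  then obtain g where "g \<in> I" "g \<noteq> 0" "l = lead_mono lt g"
    unfolding lead_monos_def by auto
  then show "l \<in> lists X"
    using lead_mono_spec(3)[OF order fa_ideal_elem[OF ideal]] by simp
qed

section \<open>Growth functions and growth exponents\<close>

definition words_le :: "'x set \<Rightarrow> nat \<Rightarrow> 'x list set" where
  "words_le X n = {w \<in> lists X. length w \<le> n}"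

lemma finite_words_le: "finite X \<Longrightarrow> finite (words_le X n)"
proof -
  assume "finite X"
  have "words_le X n = {xs. set xs \<subseteq> X \<and> length xs \<le> n}"
    by (auto simp: words_le_def)
  then show ?thesis
    using finite_lists_length_le[OF \<open>finite X\<close>] by simp
qed

lemma finite_indep_cards:
  assumes "finite X"
  shows "finite {card S | S. S \<subseteq> words_le X n \<and> indep_mod I S}"
proof (rule finite_subset)
  show "{card S | S. S \<subseteq> words_le X n \<and> indep_mod I S} \<subseteq> card ` Pow (words_le X n)"
    by blast
  show "finite (card ` Pow (words_le X n))"
    using finite_words_le[OF assms] by simp
qed

lemma growth_eq_Max: "growth X I n = Max {card S | S. S \<subseteq> words_le X n \<and> indep_mod I S}"
  by (simp add: growth_def words_le_def)

lemma card_le_growth: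
  assumes "finite X" "S \<subseteq> words_le X n" "indep_mod I S"
  shows "card S \<le> growth X I n"
  unfolding growth_eq_Max by (rule Max_ge[OF finite_indep_cards[OF assms(1)]]) (use assms(2,3) in auto)

lemma growth_witness:
  assumes "finite X"
  obtains S where "S \<subseteq> words_le X n" "indep_mod I S" "card S = growth X I n"
proof -
  have "indep_mod I {}"
    by (simp add: indep_mod_def)
  then have "card {} \<in> {card S | S. S \<subseteq> words_le X n \<and> indep_mod I S}"
    by (intro CollectI exI[of _ "{}"]) simp
  then have "growth X I n \<in> {card S | S. S \<subseteq> words_le X n \<and> indep_mod I S}"
    unfolding growth_eq_Max by (intro Max_in finite_indep_cards[OF assms]) auto
  then obtain S where "S \<subseteq> words_le X n" "indep_mod I S" "card S = growth X I n"
    by auto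
  then show ?thesis
    by (rule that)
qed

lemma indep_modD:
  "indep_mod I S \<Longrightarrow> (\<lambda>v. \<Sum>w\<in>S. c w * fa_mono w v) \<in> I \<Longrightarrow> w \<in> S \<Longrightarrow> c w = 0"
  unfolding indep_mod_def by blast

lemma indep_mod_fa_mono_notin:
  assumes "indep_mod I S" "finite S" "s \<in> S"
  shows "fa_mono s \<notin> I"
proof
  assume "fa_mono s \<in> I"
  let ?c = "\<lambda>w. if w = s then 1 else 0"
  have eq: "(\<lambda>v. \<Sum>w\<in>S. ?c w * fa_mono w v) = fa_mono s"
  proof
    fix v
    show "(\<Sum>w\<in>S. ?c w * fa_mono w v) = fa_mono s v"
      unfolding sum_fa_mono_apply[OF assms(2)] using assms(3) by (simp add: fa_mono_def)
  qed
  have "(\<lambda>v. \<Sum>w\<in>S. ?c w * fa_mono w v) \<in> I"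
    using \<open>fa_mono s \<in> I\<close> unfolding eq .
  from indep_modD[OF assms(1) this assms(3)] show False
    by simp
qed

definition growth_exponent :: "(nat \<Rightarrow> nat) \<Rightarrow> ereal" where
  "growth_exponent g = limsup (\<lambda>n. ereal (ln (real (g n)) / ln (real n)))"

lemma GKdim_eq_growth_exponent: "GKdim X I = growth_exponent (growth X I)"
  by (simp add: GKdim_def growth_exponent_def)

lemma ln_of_nat_mono:
  assumes "(a::nat) \<le> b"
  shows "ln (real a) \<le> ln (real b)"
proof (cases "a = 0")
  case True
  then show ?thesis
    by (cases "b = 0") auto
next
  case False
  then show ?thesis
    using assms by simp
qed

lemma growth_exponent_le_mult:
  fixes a b :: "nat \<Rightarrow> nat" and K d :: nat
  assumes d: "d \<ge> 1" and K: "K \<ge> 1" and le: "\<And>n. n \<ge> 1 \<Longrightarrow> a n \<le> b (K * n ^ d)"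
  shows "growth_exponent a \<le> ereal (real d) * growth_exponent b"
proof -
  define rate where "rate g n = ereal (ln (real (g n)) / ln (real n))" for g :: "nat \<Rightarrow> nat" and n
  define m where "m n = K * n ^ d" for n
  define u where "u n = ereal (ln (real (m n)) / ln (real n))" for n
  have "strict_mono m"
    using d K by (auto simp: strict_mono_def m_def intro: power_strict_mono)
  have ln_m: "ln (real (m n)) = ln (real K) + real d * ln (real n)" if "n \<ge> 1" for n
    using that K by (simp add: m_def ln_mult ln_realpow)
  have "(\<lambda>n. ln (real K) / ln (real n) + real d) \<longlonglongrightarrow> real d"
    by real_asymp
  then have "(\<lambda>n. ln (real (m n)) / ln (real n)) \<longlonglongrightarrow> real d"
  proof (rule Lim_transform_eventually)
    show "\<forall>\<^sub>F n in sequentially. ln (real K) / ln (real n) + real d = ln (real (m n)) / ln (real n)"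
      using eventually_ge_at_top[of 2] by eventually_elim (simp add: ln_m field_simps)
  qed
  then have u_lim: "u \<longlonglongrightarrow> ereal (real d)"
    unfolding u_def by (rule tendsto_ereal)
  txt \<open>\<open>ln a(n) / ln n \<le> (ln m(n) / ln n) (ln b(m n) / ln m(n))\<close>, where the first factor tends to
    \<open>d\<close> and the second is a subsequence of the rate of \<open>b\<close>.\<close>
  have "\<forall>\<^sub>F n in sequentially. rate a n \<le> u n * (rate b \<circ> m) n"
    using eventually_ge_at_top[of 2]
  proof eventually_elim
    case (elim n)
    have "n \<le> m n"
      using \<open>strict_mono m\<close> by (rule strict_mono_imp_increasing)
    then have pos: "0 < ln (real n)" "0 < ln (real (m n))"
      using elim by auto
    have "ln (real (a n)) \<le> ln (real (b (m n)))"
      using le[of n] elim by (simp add: m_def ln_of_nat_mono)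
    then show ?case
      using pos by (simp add: rate_def u_def divide_right_mono)
  qed
  then have "limsup (rate a) \<le> limsup (\<lambda>n. u n * (rate b \<circ> m) n)"
    by (rule Limsup_mono)
  also have "\<dots> = ereal (real d) * limsup (rate b \<circ> m)"
    by (rule ereal_limsup_lim_mult[OF u_lim]) (use d in auto)
  also have "\<dots> \<le> ereal (real d) * limsup (rate b)"
    by (intro ereal_mult_left_mono limsup_subseq_mono \<open>strict_mono m\<close>) auto
  finally show ?thesis
    unfolding growth_exponent_def rate_def .
qed

section \<open>Independence modulo the associated monomial ideal\<close>

lemma indep_mod_assoc_imp_indep_mod:
  assumes ideal: "fa_ideal X I" and order: "monomial_order X lt"
    and indep: "indep_mod (assoc_monomial_ideal X lt I) S" and "finite S"
  shows "indep_mod I S"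
  unfolding indep_mod_def
proof (intro allI impI ballI)
  fix c :: "'a list \<Rightarrow> 'b" and w
  let ?g = "\<lambda>v. \<Sum>w\<in>S. c w * fa_mono w v"
  assume "?g \<in> I" and "w \<in> S"
  have g_apply: "?g v = (if v \<in> S then c v else 0)" for v
    using \<open>finite S\<close> by (rule sum_fa_mono_apply)
  show "c w = 0"
  proof (rule ccontr)
    assume "c w \<noteq> 0"
    then have "?g w \<noteq> 0"
      using g_apply[of w] \<open>w \<in> S\<close> by simp
    then have "?g \<noteq> 0"
      by (metis zero_fun_apply)
    define l where "l = lead_mono lt ?g"
    have "?g l \<noteq> 0"
      unfolding l_def by (rule lead_mono_spec(1)[OF order fa_ideal_elem[OF ideal \<open>?g \<in> I\<close>] \<open>?g \<noteq> 0\<close>])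
    then have "l \<in> S"
      using g_apply[of l] by presburger
    have "l \<in> lead_monos lt I"
      unfolding lead_monos_def l_def using \<open>?g \<in> I\<close> \<open>?g \<noteq> 0\<close> by auto
    then have "fa_mono l \<in> assoc_monomial_ideal X lt I"
      unfolding assoc_monomial_ideal_def fa_ideal_gen_monos_def by blast
    then show False
      using indep_mod_fa_mono_notin[OF indep \<open>finite S\<close> \<open>l \<in> S\<close>] by contradiction
  qed
qed

lemma growth_assoc_le_growth:
  assumes "finite X" "fa_ideal X I" "monomial_order X lt"
  shows "growth X (assoc_monomial_ideal X lt I) n \<le> growth X I n"
proof -
  obtain S where S: "S \<subseteq> words_le X n" "indep_mod (assoc_monomial_ideal X lt I) S"
    "card S = growth X (assoc_monomial_ideal X lt I) n"
    using growth_witness[OF assms(1)] by blast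
  have "finite S"
    using S(1) finite_words_le[OF assms(1)] by (rule finite_subset)
  then have "indep_mod I S"
    using indep_mod_assoc_imp_indep_mod[OF assms(2,3) S(2)] by blast
  then show ?thesis
    using card_le_growth[OF assms(1) S(1)] S(3) by simp
qed

section \<open>Normal words and reduction\<close>

definition normal_word :: "'x list set \<Rightarrow> 'x list \<Rightarrow> bool" where
  "normal_word L w \<longleftrightarrow> \<not> (\<exists>a l b. l \<in> L \<and> w = a @ l @ b)"

lemma not_normal_word_factor: "\<not> normal_word L u \<Longrightarrow> \<not> normal_word L (a @ u @ b)"
  unfolding normal_word_def by (metis append.assoc)

lemma not_normal_word_mem: "l \<in> L \<Longrightarrow> \<not> normal_word L l"
  unfolding normal_word_def by (metis append.left_neutral append.right_neutral)

definition nonnormal_span :: "'x set \<Rightarrow> 'x list set \<Rightarrow> ('x list \<Rightarrow> 'k::field) set" where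
  "nonnormal_span X L = {p. fa_elem X p \<and> (\<forall>w. p w \<noteq> 0 \<longrightarrow> \<not> normal_word L w)}"

lemma fa_ideal_nonnormal_span: "fa_ideal X (nonnormal_span X L :: ('x list \<Rightarrow> 'k::field) set)"
  unfolding fa_ideal_def
proof (intro conjI ballI allI impI)
  show "nonnormal_span X L \<subseteq> {p. fa_elem X p}"
    by (auto simp: nonnormal_span_def)
  show "fa_zero \<in> nonnormal_span X L"
    by (simp add: nonnormal_span_def fa_elem_def)
next
  fix p q :: "'x list \<Rightarrow> 'k"
  assume "p \<in> nonnormal_span X L" "q \<in> nonnormal_span X L"
  then have "fa_elem X (p + q)"
    using fa_elem_diff_scale[of X p q "-1"] by (simp add: nonnormal_span_def plus_fun_def)
  moreover have "\<not> normal_word L w" if "(p + q) w \<noteq> 0" for w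
    using that \<open>p \<in> nonnormal_span X L\<close> \<open>q \<in> nonnormal_span X L\<close>
    by (cases "p w = 0") (auto simp: nonnormal_span_def)
  ultimately show "fa_add p q \<in> nonnormal_span X L"
    by (simp add: nonnormal_span_def)
next
  fix p a b :: "'x list \<Rightarrow> 'k"
  assume p: "p \<in> nonnormal_span X L" and ab: "fa_elem X a \<and> fa_elem X b"
  have "\<not> normal_word L w" if nz: "fa_mul (fa_mul a p) b w \<noteq> 0" for w
  proof -
    obtain i where "fa_mul a p (take i w) \<noteq> 0"
      using fa_mul_nonzeroD[OF nz] by blast
    then obtain j where "p (drop j (take i w)) \<noteq> 0"
      using fa_mul_nonzeroD by blast
    then have "\<not> normal_word L (take j (take i w) @ drop j (take i w) @ drop i w)"
      using p by (intro not_normal_word_factor) (simp add: nonnormal_span_def)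
    then show ?thesis
      by (metis append.assoc append_take_drop_id)
  qed
  moreover have "fa_elem X (fa_mul (fa_mul a p) b)"
    using ab p by (intro fa_elem_mul) (auto simp: nonnormal_span_def)
  ultimately show "fa_mul (fa_mul a p) b \<in> nonnormal_span X L"
    by (simp add: nonnormal_span_def)
qed

lemma gen_monos_subset_nonnormal_span:
  assumes "L \<subseteq> lists X"
  shows "fa_ideal_gen_monos X L \<subseteq> nonnormal_span X L"
proof -
  have "fa_mono l \<in> nonnormal_span X L" if "l \<in> L" for l
    using assms that fa_elem_mono[of l X] not_normal_word_mem[OF that]
    by (auto simp: nonnormal_span_def fa_mono_def)
  then have "fa_mono ` L \<subseteq> nonnormal_span X L"
    by blast
  then show ?thesis
    unfolding fa_ideal_gen_monos_def using fa_ideal_nonnormal_span by blast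
qed

lemma indep_mod_gen_monos_normal:
  assumes "L \<subseteq> lists X" and "finite T" and normal: "\<And>t. t \<in> T \<Longrightarrow> normal_word L t"
  shows "indep_mod (fa_ideal_gen_monos X L) T"
  unfolding indep_mod_def
proof (intro allI impI ballI)
  fix c :: "'a list \<Rightarrow> 'b" and w
  assume "(\<lambda>v. \<Sum>w\<in>T. c w * fa_mono w v) \<in> fa_ideal_gen_monos X L" and "w \<in> T"
  then have "(\<lambda>v. \<Sum>w\<in>T. c w * fa_mono w v) \<in> nonnormal_span X L"
    using gen_monos_subset_nonnormal_span[OF assms(1)] by blast
  then have "(\<Sum>w'\<in>T. c w' * fa_mono w' w) = 0"
    using normal[OF \<open>w \<in> T\<close>] by (auto simp: nonnormal_span_def)
  then show "c w = 0"
    using \<open>w \<in> T\<close> by (simp add: sum_fa_mono_apply[OF \<open>finite T\<close>])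
qed

text \<open>If \<open>w = a l b\<close> with \<open>l\<close> the leading monomial of \<open>g \<in> I\<close>, subtracting a multiple of
  \<open>a g b\<close> replaces \<open>w\<close> by smaller words.\<close>

lemma not_normal_word_reducible:
  assumes ideal: "fa_ideal X I" and order: "monomial_order X lt"
    and "w \<in> lists X" and "\<not> normal_word (lead_monos lt I) w"
  obtains e where "fa_elem X e" "\<And>v. e v \<noteq> 0 \<Longrightarrow> lt v w" "fa_mono w - e \<in> I"
proof -
  obtain a l b where "l \<in> lead_monos lt I" and w: "w = a @ l @ b"
    using assms(4) unfolding normal_word_def by blast
  then obtain g where "g \<in> I" "g \<noteq> 0" and l: "l = lead_mono lt g"
    unfolding lead_monos_def by auto
  have g: "fa_elem X g"
    using fa_ideal_elem[OF ideal \<open>g \<in> I\<close>] .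
  note lead = lead_mono_spec[OF order g \<open>g \<noteq> 0\<close>, folded l]
  have "a \<in> lists X" "b \<in> lists X"
    using \<open>w \<in> lists X\<close> w by auto
  define h where "h = fa_mul (fa_mul (fa_mono a) g) (fa_mono b)"
  define e where "e = (\<lambda>v. fa_mono w v - inverse (g l) * h v)"
  have "h \<in> I"
    unfolding h_def using fa_ideal_mul[OF ideal \<open>g \<in> I\<close>] fa_elem_mono \<open>a \<in> lists X\<close> \<open>b \<in> lists X\<close>
    by blast
  show ?thesis
  proof (rule that)
    show "fa_elem X e"
      unfolding e_def using fa_elem_mono[OF \<open>w \<in> lists X\<close>] fa_ideal_elem[OF ideal \<open>h \<in> I\<close>]
      by (rule fa_elem_diff_scale)
    show "fa_mono w - e \<in> I"
      using fa_ideal_scale[OF ideal \<open>h \<in> I\<close>, of "inverse (g l)"] by (simp add: e_def fun_diff_def)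
    fix v assume "e v \<noteq> 0"
    have "h w = g l"
      unfolding h_def w by (rule fa_mul_monos_apply)
    then have "v \<noteq> w"
      using \<open>e v \<noteq> 0\<close> lead(1) by (auto simp: e_def fa_mono_def)
    then have "h v \<noteq> 0"
      using \<open>e v \<noteq> 0\<close> by (auto simp: e_def fa_mono_def)
    then obtain t where t: "v = a @ t @ b" "g t \<noteq> 0"
      unfolding h_def using fa_mul_monos_nonzeroD by blast
    have "t \<in> lists X"
      using g t(2) by (auto simp: fa_elem_def)
    moreover have "t \<noteq> l"
      using \<open>v \<noteq> w\<close> t(1) w by blast
    ultimately show "lt v w"
      using lead(2)[OF t(2)] lead(3) monomial_order_mult[OF order _ _ \<open>a \<in> lists X\<close> \<open>b \<in> lists X\<close>]
      unfolding t(1) w by blast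
  qed
qed

definition normal_words_below ::
  "'x set \<Rightarrow> ('x list \<Rightarrow> 'x list \<Rightarrow> bool) \<Rightarrow> 'x list set \<Rightarrow> 'x list \<Rightarrow> 'x list set" where
  "normal_words_below X lt L w = {t \<in> lists X. normal_word L t \<and> (t = w \<or> lt t w)}"

lemma normal_words_below_mono:
  assumes "monomial_order X lt" "lt v w" "v \<in> lists X" "w \<in> lists X"
  shows "normal_words_below X lt L v \<subseteq> normal_words_below X lt L w"
  using assms monomial_order_trans[OF assms(1)] unfolding normal_words_below_def by blast

definition reduces_to ::
  "('x list \<Rightarrow> 'k::field) set \<Rightarrow> 'x list set \<Rightarrow> ('x list \<Rightarrow> 'k) \<Rightarrow> ('x list \<Rightarrow> 'k) \<Rightarrow> bool" where
  "reduces_to I N p r \<longleftrightarrow> (\<forall>t. r t \<noteq> 0 \<longrightarrow> t \<in> N) \<and> p - r \<in> I"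

lemma reduces_to_mono: "N \<subseteq> N' \<Longrightarrow> reduces_to I N p r \<Longrightarrow> reduces_to I N' p r"
  unfolding reduces_to_def by blast

lemma reduces_to_cong:
  assumes "fa_ideal X I" "p - q \<in> I" "reduces_to I N q r"
  shows "reduces_to I N p r"
proof -
  have "p - r = (p - q) + (q - r)"
    by simp
  then show ?thesis
    using assms fa_ideal_add[OF assms(1)] unfolding reduces_to_def by metis
qed

lemma reduces_to_lincomb:
  assumes ideal: "fa_ideal X I" and "finite E" and R: "\<And>v. v \<in> E \<Longrightarrow> reduces_to I N (fa_mono v) (R v)"
  shows "reduces_to I N (\<lambda>t. \<Sum>v\<in>E. c v * fa_mono v t) (\<lambda>t. \<Sum>v\<in>E. c v * R v t)"
  unfolding reduces_to_def
proof
  show "\<forall>t. (\<Sum>v\<in>E. c v * R v t) \<noteq> 0 \<longrightarrow> t \<in> N"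
  proof (intro allI impI)
    fix t assume "(\<Sum>v\<in>E. c v * R v t) \<noteq> 0"
    then obtain v where "v \<in> E" "c v * R v t \<noteq> 0"
      by (rule sum.not_neutral_contains_not_neutral)
    then show "t \<in> N"
      using R[OF \<open>v \<in> E\<close>] by (simp add: reduces_to_def)
  qed
  have "(\<lambda>t. \<Sum>v\<in>E. c v * fa_mono v t) - (\<lambda>t. \<Sum>v\<in>E. c v * R v t) =
      (\<lambda>t. \<Sum>v\<in>E. c v * (fa_mono v - R v) t)"
    by (simp add: fun_eq_iff right_diff_distrib sum_subtractf)
  also have "\<dots> \<in> I"
    by (rule fa_ideal_lincomb[OF ideal \<open>finite E\<close>]) (use R[unfolded reduces_to_def] in blast)
  finally show "(\<lambda>t. \<Sum>v\<in>E. c v * fa_mono v t) - (\<lambda>t. \<Sum>v\<in>E. c v * R v t) \<in> I" .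
qed

lemma normal_form_exists:
  assumes ideal: "fa_ideal X I" and order: "monomial_order X lt"
  shows "w \<in> lists X \<Longrightarrow> \<exists>r. reduces_to I (normal_words_below X lt (lead_monos lt I) w) (fa_mono w) r"
proof (induction w rule: wf_induct[OF monomial_orderD(4)[OF order]])
  case (1 w)
  let ?N = "normal_words_below X lt (lead_monos lt I)"
  show ?case
  proof (cases "normal_word (lead_monos lt I) w")
    case True
    then have "reduces_to I (?N w) (fa_mono w) (fa_mono w)"
      using "1.prems" fa_ideal_zero[OF ideal]
      by (simp add: reduces_to_def fa_mono_def normal_words_below_def)
    then show ?thesis
      by blast
  next
    case False
    then obtain e where e: "fa_elem X e" "\<And>v. e v \<noteq> 0 \<Longrightarrow> lt v w" "fa_mono w - e \<in> I"
      using not_normal_word_reducible[OF ideal order "1.prems"] by blast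
    define E where "E = {v. e v \<noteq> 0}"
    have "finite E" "E \<subseteq> lists X"
      using e(1) by (auto simp: E_def fa_elem_def)
    have "\<exists>r. reduces_to I (?N w) (fa_mono v) r" if "v \<in> E" for v
    proof -
      have "v \<in> lists X" "lt v w"
        using that \<open>E \<subseteq> lists X\<close> e(2) by (auto simp: E_def)
      then have "(v, w) \<in> {(u, v). u \<in> lists X \<and> v \<in> lists X \<and> lt u v}"
        using "1.prems" by simp
      then obtain r where "reduces_to I (?N v) (fa_mono v) r"
        using "1.IH" \<open>v \<in> lists X\<close> by blast
      then show ?thesis
        using normal_words_below_mono[OF order \<open>lt v w\<close> \<open>v \<in> lists X\<close> "1.prems"]
        by (blast intro: reduces_to_mono)
    qed
    then obtain R where "\<And>v. v \<in> E \<Longrightarrow> reduces_to I (?N w) (fa_mono v) (R v)"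
      by metis
    then have "reduces_to I (?N w) (\<lambda>t. \<Sum>v\<in>E. e v * fa_mono v t) (\<lambda>t. \<Sum>v\<in>E. e v * R v t)"
      by (rule reduces_to_lincomb[OF ideal \<open>finite E\<close>])
    moreover have "(\<lambda>t. \<Sum>v\<in>E. e v * fa_mono v t) = e"
      by (rule fa_monomial_expansion[OF \<open>finite E\<close>]) (simp add: E_def)
    ultimately show ?thesis
      using reduces_to_cong[OF ideal e(3)] by auto
  qed
qed

interpretation fun_space: vector_space "\<lambda>c (p :: 'x list \<Rightarrow> 'k::field) w. c * p w"
  by unfold_locales (simp_all add: fun_eq_iff algebra_simps)

lemma reduces_to_coeffs_zero:
  assumes ideal: "fa_ideal X I" and "finite S" and indep: "indep_mod I S"
    and red: "\<And>s. s \<in> S \<Longrightarrow> reduces_to I T (fa_mono s) (r s)"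
    and zero: "\<And>t. (\<Sum>s\<in>S. c s * r s t) = 0"
  shows "\<forall>s\<in>S. c s = 0"
proof -
  have "(\<lambda>t. \<Sum>s\<in>S. c s * (fa_mono s - r s) t) \<in> I"
    by (rule fa_ideal_lincomb[OF ideal \<open>finite S\<close>]) (use red[unfolded reduces_to_def] in blast)
  moreover have "(\<lambda>t. \<Sum>s\<in>S. c s * (fa_mono s - r s) t) = (\<lambda>t. \<Sum>s\<in>S. c s * fa_mono s t)"
    using zero by (simp add: right_diff_distrib sum_subtractf)
  ultimately show ?thesis
    using indep_modD[OF indep] by auto
qed

text \<open>The residues \<open>r s\<close> of the words of \<open>S\<close> are linearly independent elements of the span
  of the words of \<open>T\<close>.\<close>

lemma indep_mod_card_le:
  assumes ideal: "fa_ideal X I" and "finite S" "finite T" and indep: "indep_mod I S"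
    and red: "\<And>s. s \<in> S \<Longrightarrow> reduces_to I T (fa_mono s) (r s)"
  shows "card S \<le> card T"
proof -
  note coeffs_zero = reduces_to_coeffs_zero[OF ideal \<open>finite S\<close> indep red]
  have "inj_on r S"
  proof (rule inj_onI, rule ccontr)
    fix s1 s2 assume "s1 \<in> S" "s2 \<in> S" "r s1 = r s2" "s1 \<noteq> s2"
    let ?c = "\<lambda>s. (if s = s1 then 1 else 0) - (if s = s2 then 1 else 0)"
    have "(\<Sum>s\<in>S. ?c s * r s t) = 0" for t
      using \<open>finite S\<close> \<open>s1 \<in> S\<close> \<open>s2 \<in> S\<close> \<open>r s1 = r s2\<close>
      by (simp add: left_diff_distrib sum_subtractf if_distrib[of "\<lambda>x. x * _"] sum.delta cong: if_cong)
    then show False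
      using coeffs_zero[of ?c] \<open>s1 \<in> S\<close> \<open>s1 \<noteq> s2\<close> by auto
  qed
  have "fun_space.independent (r ` S)"
  proof
    assume "fun_space.dependent (r ` S)"
    then obtain u where u: "\<exists>v\<in>r ` S. u v \<noteq> 0" "(\<Sum>v\<in>r ` S. (\<lambda>w. u v * v w)) = 0"
      using fun_space.dependent_finite[OF finite_imageI[OF \<open>finite S\<close>]] by blast
    have "(\<Sum>s\<in>S. u (r s) * r s t) = 0" for t
      using fun_cong[OF u(2), of t] sum.reindex[OF \<open>inj_on r S\<close>, of "\<lambda>v. u v * v t"]
      by (simp add: sum_fun_apply)
    then show False
      using coeffs_zero[of "u \<circ> r"] u(1) by auto
  qed
  moreover have "r ` S \<subseteq> fun_space.span (fa_mono ` T)"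
  proof
    fix p assume "p \<in> r ` S"
    then obtain s where "s \<in> S" "p = r s"
      by blast
    then have "p = (\<Sum>t\<in>T. (\<lambda>w. r s t * fa_mono t w))"
      using fa_monomial_expansion[OF \<open>finite T\<close>, of "r s"] red
      by (simp add: fun_eq_iff sum_fun_apply reduces_to_def)
    also have "\<dots> \<in> fun_space.span (fa_mono ` T)"
      by (intro fun_space.span_sum fun_space.span_scale fun_space.span_base) auto
    finally show "p \<in> fun_space.span (fa_mono ` T)" .
  qed
  ultimately have "card (r ` S) \<le> card (fa_mono ` T :: ('a list \<Rightarrow> 'b) set)"
    using fun_space.independent_span_bound[OF finite_imageI[OF \<open>finite T\<close>]] by blast
  also have "\<dots> \<le> card T"
    using \<open>finite T\<close> by (rule card_image_le)
  finally show ?thesis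
    using card_image[OF \<open>inj_on r S\<close>] by simp
qed

lemma growth_le_growth_assoc:
  assumes "finite X" and ideal: "fa_ideal X I" and order: "monomial_order X lt"
    and bound: "\<And>s t. s \<in> words_le X n \<Longrightarrow> t \<in> lists X \<Longrightarrow> t = s \<or> lt t s \<Longrightarrow> length t \<le> m"
  shows "growth X I n \<le> growth X (assoc_monomial_ideal X lt I) m"
proof -
  let ?L = "lead_monos lt I"
  define T where "T = {t \<in> words_le X m. normal_word ?L t}"
  obtain S where S: "S \<subseteq> words_le X n" "indep_mod I S" "card S = growth X I n"
    using growth_witness[OF \<open>finite X\<close>] by blast
  have "\<exists>r. reduces_to I T (fa_mono s) r" if "s \<in> S" for s
  proof -
    have "s \<in> lists X" "s \<in> words_le X n"
      using that S(1) by (auto simp: words_le_def)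
    then obtain r where "reduces_to I (normal_words_below X lt ?L s) (fa_mono s) r"
      using normal_form_exists[OF ideal order] by blast
    moreover have "normal_words_below X lt ?L s \<subseteq> T"
      using bound[OF \<open>s \<in> words_le X n\<close>] by (auto simp: normal_words_below_def T_def words_le_def)
    ultimately show ?thesis
      by (blast intro: reduces_to_mono)
  qed
  then obtain r where r: "\<And>s. s \<in> S \<Longrightarrow> reduces_to I T (fa_mono s) (r s)"
    by metis
  have "finite T" "finite S"
    using finite_words_le[OF \<open>finite X\<close>] S(1) by (auto simp: T_def intro: finite_subset)
  then have "card S \<le> card T"
    using indep_mod_card_le[OF ideal _ _ S(2) r] by blast
  also have "card T \<le> growth X (assoc_monomial_ideal X lt I) m"
  proof (rule card_le_growth[OF \<open>finite X\<close>])
    show "T \<subseteq> words_le X m"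
      by (auto simp: T_def)
    show "indep_mod (assoc_monomial_ideal X lt I) T"
      unfolding assoc_monomial_ideal_def
      using lead_monos_subset_lists[OF ideal order] \<open>finite T\<close>
      by (rule indep_mod_gen_monos_normal) (simp add: T_def)
  qed
  finally show ?thesis
    using S(3) by simp
qed

section \<open>Polynomial length bound\<close>

lemma poly_le_coeff_sum_power:
  fixes f :: "real poly"
  assumes "0 \<le> x" "x \<le> real n" "1 \<le> n"
  shows "poly f x \<le> (\<Sum>i\<le>degree f. \<bar>coeff f i\<bar>) * real n ^ degree f"
proof -
  have "poly f x = (\<Sum>i\<le>degree f. coeff f i * x ^ i)"
    by (rule poly_altdef)
  also have "\<dots> \<le> (\<Sum>i\<le>degree f. \<bar>coeff f i\<bar> * real n ^ degree f)"
  proof (rule sum_mono)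
    fix i assume "i \<in> {..degree f}"
    have "coeff f i * x ^ i \<le> \<bar>coeff f i\<bar> * x ^ i"
      using assms by (intro mult_right_mono) auto
    also have "\<dots> \<le> \<bar>coeff f i\<bar> * real n ^ i"
      using assms by (intro mult_left_mono power_mono) auto
    also have "\<dots> \<le> \<bar>coeff f i\<bar> * real n ^ degree f"
      using assms \<open>i \<in> {..degree f}\<close> by (intro mult_left_mono power_increasing) auto
    finally show "coeff f i * x ^ i \<le> \<bar>coeff f i\<bar> * real n ^ degree f" .
  qed
  also have "\<dots> = (\<Sum>i\<le>degree f. \<bar>coeff f i\<bar>) * real n ^ degree f"
    by (simp add: sum_distrib_right)
  finally show ?thesis .
qed

lemma length_below_bounded:
  fixes f :: "real poly" and N :: int
  assumes "degree f = d" and "d \<ge> 1"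
    and hyp: "\<forall>u\<in>lists X. \<forall>v\<in>lists X. real (length u) \<ge> real_of_int N \<longrightarrow>
            lt u v \<longrightarrow> real (length u) \<le> poly f (real (length v))"
  obtains K :: nat where "K \<ge> 1"
    and "\<And>n s t. n \<ge> 1 \<Longrightarrow> s \<in> words_le X n \<Longrightarrow> t \<in> lists X \<Longrightarrow> t = s \<or> lt t s \<Longrightarrow>
          length t \<le> K * n ^ d"
proof
  define C where "C = (\<Sum>i\<le>degree f. \<bar>coeff f i\<bar>)"
  define K where "K = nat \<lceil>max C (real_of_int N)\<rceil> + 1"
  have "C \<le> real K" "real_of_int N \<le> real K"
    unfolding K_def by linarith+
  show "K \<ge> 1"
    by (simp add: K_def)
  fix n s t assume "n \<ge> 1" "s \<in> words_le X n" "t \<in> lists X" "t = s \<or> lt t s"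
  then have "s \<in> lists X" "length s \<le> n"
    by (auto simp: words_le_def)
  have "1 \<le> real n ^ d" "real n \<le> real n ^ d"
    using \<open>n \<ge> 1\<close> \<open>d \<ge> 1\<close> by (simp_all add: one_le_power self_le_power)
  have "real (length t) \<le> real K * real n ^ d"
  proof (cases "t = s \<or> real (length t) < real_of_int N")
    case True
    then have "real (length t) \<le> max (real n) (real K)"
      using \<open>length s \<le> n\<close> \<open>real_of_int N \<le> real K\<close> by auto
    also have "\<dots> \<le> real K * real n ^ d"
      using \<open>real n \<le> real n ^ d\<close> \<open>1 \<le> real n ^ d\<close> \<open>K \<ge> 1\<close>
      by (auto intro: order_trans[OF _ mult_right_mono[of 1 "real K"]])
    finally show ?thesis .
  next
    case False
    then have "real (length t) \<le> poly f (real (length s))"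
      using hyp \<open>t \<in> lists X\<close> \<open>s \<in> lists X\<close> \<open>t = s \<or> lt t s\<close> by auto
    also have "\<dots> \<le> C * real n ^ d"
      unfolding C_def \<open>degree f = d\<close>[symmetric]
      using \<open>length s \<le> n\<close> \<open>n \<ge> 1\<close> by (intro poly_le_coeff_sum_power) auto
    also have "\<dots> \<le> real K * real n ^ d"
      using \<open>C \<le> real K\<close> \<open>1 \<le> real n ^ d\<close> by (intro mult_right_mono) auto
    finally show ?thesis .
  qed
  then show "length t \<le> K * n ^ d"
    by (metis of_nat_le_iff of_nat_mult of_nat_power)
qed

theorem theorem1:
  fixes X :: "'x set" and I :: "('x list \<Rightarrow> 'k::field) set"
    and lt :: "'x list \<Rightarrow> 'x list \<Rightarrow> bool"
    and f :: "real poly" and d :: nat and N :: int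
  assumes "finite X"
    and "fa_ideal X I"
    and "monomial_order X lt"
    and "degree f = d" and "d \<ge> 1"
    and "\<forall>u\<in>lists X. \<forall>v\<in>lists X. real (length u) \<ge> real_of_int N \<longrightarrow>
            lt u v \<longrightarrow> real (length u) \<le> poly f (real (length v))"
  shows "GKdim X (assoc_monomial_ideal X lt I) \<le> GKdim X I \<and>
         GKdim X I \<le> ereal (real d) * GKdim X (assoc_monomial_ideal X lt I)"
proof
  let ?J = "assoc_monomial_ideal X lt I"
  have "growth X ?J n \<le> growth X I (1 * n ^ 1)" for n
    using growth_assoc_le_growth[OF assms(1-3)] by simp
  then show "GKdim X ?J \<le> GKdim X I"
    using growth_exponent_le_mult[of 1 1 "growth X ?J" "growth X I"]
    by (simp add: GKdim_eq_growth_exponent)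
  obtain K where "K \<ge> 1" and K: "\<And>n s t. n \<ge> 1 \<Longrightarrow> s \<in> words_le X n \<Longrightarrow> t \<in> lists X \<Longrightarrow>
      t = s \<or> lt t s \<Longrightarrow> length t \<le> K * n ^ d"
    using length_below_bounded[OF assms(4-6)] by blast
  have "growth X I n \<le> growth X ?J (K * n ^ d)" if "n \<ge> 1" for n
    using growth_le_growth_assoc[OF assms(1-3)] K[OF that] by blast
  then show "GKdim X I \<le> ereal (real d) * GKdim X ?J"
    unfolding GKdim_eq_growth_exponent by (rule growth_exponent_le_mult[OF \<open>d \<ge> 1\<close> \<open>K \<ge> 1\<close>])
qed

end
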